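(* In $\mathbb{C}^3\otimes\mathbb{C}^2\otimes\mathbb{C}^2$ there are exactly two SLOCC equivalence classes of SLOCC maximal states, represented by $|\Phi_1\rangle=|0\rangle|00\rangle+|1\rangle|01\rangle+|2\rangle|11\rangle$ and $|\Phi_2\rangle=|0\rangle|00\rangle+|1\rangle(|01\rangle+|10\rangle)+|2\rangle|11\rangle$, where the first ket is in $\mathbb{C}^3$ and the two-qubit ket is in $\mathbb{C}^2\otimes\mathbb{C}^2$.
   Context: $|\psi\rangle\le_{\mathrm{SLOCC}}|\phi\rangle$ means $(L_1\otimes L_2\otimes L_3)|\phi\rangle=|\psi\rangle$ for some linear operators $L_i$ on the respective factors; SLOCC equivalence means mutual $\le_{\mathrm{SLOCC}}$ (equivalently relation by invertible local operators). A state $|\phi\rangle$ is SLOCC maximal if for every $|\psi\rangle$ in the space, $|\phi\rangle\le_{\mathrm{SLOCC}}|\psi\rangle$ implies $|\psi\rangle\le_{\mathrm{SLOCC}}|\phi\rangle$. $\{|0\rangle,|1\rangle,\dots\}$ denote standard orthonormal bases. *)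

theory Defs
  imports Complex_Main "HOL-Library.Numeral_Type"
begin

text \<open>A state of C^3 (x) C^2 (x) C^2 is its coefficient array
  phi i j k = coefficient of |i>|jk>, indices in the finite types 3, 2, 2.
  Linear operators on C^n are n x n complex matrices (as functions).\<close>

type_synonym state = "3 \<Rightarrow> 2 \<Rightarrow> 2 \<Rightarrow> complex"

definition loc_apply ::
  "(3 \<Rightarrow> 3 \<Rightarrow> complex) \<Rightarrow> (2 \<Rightarrow> 2 \<Rightarrow> complex) \<Rightarrow> (2 \<Rightarrow> 2 \<Rightarrow> complex) \<Rightarrow> state \<Rightarrow> state" where
  "loc_apply L1 L2 L3 phi =
     (\<lambda>i j k. \<Sum>a\<in>UNIV. \<Sum>b\<in>UNIV. \<Sum>c\<in>UNIV. L1 i a * L2 j b * L3 k c * phi a b c)"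

definition slocc_le :: "state \<Rightarrow> state \<Rightarrow> bool" where
  "slocc_le psi phi \<longleftrightarrow> (\<exists>L1 L2 L3. loc_apply L1 L2 L3 phi = psi)"

definition slocc_equiv :: "state \<Rightarrow> state \<Rightarrow> bool" where
  "slocc_equiv psi phi \<longleftrightarrow> slocc_le psi phi \<and> slocc_le phi psi"

definition slocc_maximal :: "state \<Rightarrow> bool" where
  "slocc_maximal phi \<longleftrightarrow> (\<forall>psi. slocc_le phi psi \<longrightarrow> slocc_le psi phi)"

definition Phi1 :: state where
  "Phi1 = (\<lambda>i j k. if (i, j, k) \<in> {(0, 0, 0), (1, 0, 1), (2, 1, 1)} then 1 else 0)"

definition Phi2 :: state where
  "Phi2 = (\<lambda>i j k. if (i, j, k) \<in> {(0, 0, 0), (1, 0, 1), (1, 1, 0), (2, 1, 1)} then 1 else 0)"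

end

theory Submission
  imports Defs "HOL-Analysis.Analysis" "HOL-Library.Function_Algebras"
begin

(* A state phi is viewed as three 2x2 "slices" phi_i = (phi i b c)_{b,c}; local operators
   L1, L2, L3 act by mixing the slices with L1 and by X |-> L2 X L3^T on each slice.
   The slices of Phi1 span the upper triangular matrices, those of Phi2 the symmetric ones.

   Three slices never span the 4-dimensional space of 2x2 matrices, so some
   nonzero Q annihilates all of them: sum_{b,c} Q b c * phi i b c = 0.  If Q has rank one,
   Q = y w^T, a change of basis in the two qubits makes every slice upper triangular, so
   phi <= Phi1; if Q is invertible, a change of basis in the second qubit makes every slice
   symmetric, so phi <= Phi2.

   Both Phi1 and Phi2 have full local rank on the two qubits, which forces
   any operators L2, L3 reaching them to be invertible.  Undoing L2, L3 with adjugates then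
   shows that Phi1 would be symmetrizable, resp. Phi2 triangularizable, by invertible local
   operators, which a direct computation rules out. *)

lemma exhaust_2_zero: "(i::2) = 0 \<or> i = 1"
proof -
  have "(2::2) = 0" by simp
  then show ?thesis using exhaust_2[of i] by metis
qed

lemma exhaust_3_zero: "(i::3) = 0 \<or> i = 1 \<or> i = 2"
proof -
  have "(3::3) = 0" by simp
  then show ?thesis using exhaust_3[of i] by metis
qed

lemma UNIV_2_zero: "(UNIV::2 set) = {0, 1}"
  using exhaust_2_zero by blast

lemma UNIV_3_zero: "(UNIV::3 set) = {0, 1, 2}"
  using exhaust_3_zero by blast

lemma sum_UNIV_2: "sum f (UNIV::2 set) = f 0 + f 1"
  unfolding UNIV_2_zero by simp

lemma sum_UNIV_3: "sum f (UNIV::3 set) = f 0 + f 1 + f 2"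
  unfolding UNIV_3_zero by (simp add: add.assoc)

lemma forall_UNIV_2: "(\<forall>i::2. P i) \<longleftrightarrow> P 0 \<and> P 1"
  using exhaust_2_zero by metis

definition mat_mul :: "('a::finite \<Rightarrow> 'b::finite \<Rightarrow> complex) \<Rightarrow> ('b \<Rightarrow> 'c \<Rightarrow> complex) \<Rightarrow> 'a \<Rightarrow> 'c \<Rightarrow> complex"
  where "mat_mul A B = (\<lambda>i k. \<Sum>j\<in>UNIV. A i j * B j k)"

definition id_mat :: "'a \<Rightarrow> 'a \<Rightarrow> complex"
  where "id_mat i j = (if i = j then 1 else 0)"

definition det2 :: "(2 \<Rightarrow> 2 \<Rightarrow> complex) \<Rightarrow> complex"
  where "det2 A = A 0 0 * A 1 1 - A 0 1 * A 1 0"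

definition adj2 :: "(2 \<Rightarrow> 2 \<Rightarrow> complex) \<Rightarrow> 2 \<Rightarrow> 2 \<Rightarrow> complex"
  where "adj2 A i j = (if i = j then A (1 - i) (1 - i) else - A i j)"

definition inv2 :: "(2 \<Rightarrow> 2 \<Rightarrow> complex) \<Rightarrow> 2 \<Rightarrow> 2 \<Rightarrow> complex"
  where "inv2 A i j = adj2 A i j / det2 A"

lemma id_mat_mult:
  "id_mat i j * x = (if i = j then x else 0)" "x * id_mat i j = (if i = j then x else 0)"
  by (simp_all add: id_mat_def)

lemma adj2_mult: "mat_mul (adj2 A) A = (\<lambda>i j. det2 A * id_mat i j)"
  by (simp add: fun_eq_iff forall_UNIV_2 mat_mul_def adj2_def det2_def id_mat_def sum_UNIV_2 algebra_simps)

lemma det2_adj2: "det2 (adj2 A) = det2 A"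
  by (simp add: det2_def adj2_def algebra_simps)

lemma adj2_eq_0: "adj2 A = 0 \<Longrightarrow> A = 0"
  by (simp add: fun_eq_iff forall_UNIV_2 adj2_def)

lemma inv2_mult:
  assumes "det2 A \<noteq> 0"
  shows "mat_mul (inv2 A) A = id_mat"
proof -
  have "mat_mul (inv2 A) A = (\<lambda>i j. mat_mul (adj2 A) A i j / det2 A)"
    by (simp add: fun_eq_iff mat_mul_def inv2_def sum_divide_distrib)
  then show ?thesis
    using assms by (simp add: adj2_mult fun_eq_iff)
qed

lemma mat_mul_id_left: "mat_mul id_mat A = A"
  by (simp add: fun_eq_iff mat_mul_def id_mat_mult)

lemma sum_pull_inside3:
  "(\<Sum>c\<in>C. \<Sum>x\<in>X. \<Sum>y\<in>Y. \<Sum>z\<in>Z. F c x y z) = (\<Sum>x\<in>X. \<Sum>y\<in>Y. \<Sum>z\<in>Z. \<Sum>c\<in>C. F c x y z)"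
  by (simp add: sum.swap[of _ C])

lemma sum_swap_triple:
  "(\<Sum>a\<in>A. \<Sum>b\<in>B. \<Sum>c\<in>C. \<Sum>x\<in>X. \<Sum>y\<in>Y. \<Sum>z\<in>Z. F a b c x y z) =
   (\<Sum>x\<in>X. \<Sum>y\<in>Y. \<Sum>z\<in>Z. \<Sum>a\<in>A. \<Sum>b\<in>B. \<Sum>c\<in>C. F a b c x y z)"
  by (simp only: sum_pull_inside3[where C=C] sum_pull_inside3[where C=B] sum_pull_inside3[where C=A])

lemma loc_apply_compose:
  "loc_apply L1 L2 L3 (loc_apply M1 M2 M3 phi) =
   loc_apply (mat_mul L1 M1) (mat_mul L2 M2) (mat_mul L3 M3) phi"
proof (intro ext)
  fix i j k
  have "loc_apply L1 L2 L3 (loc_apply M1 M2 M3 phi) i j k =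
    (\<Sum>a\<in>UNIV. \<Sum>b\<in>UNIV. \<Sum>c\<in>UNIV. \<Sum>a'\<in>UNIV. \<Sum>b'\<in>UNIV. \<Sum>c'\<in>UNIV.
        L1 i a * L2 j b * L3 k c * (M1 a a' * M2 b b' * M3 c c' * phi a' b' c'))"
    unfolding loc_apply_def by (simp add: sum_distrib_left)
  also have "\<dots> = (\<Sum>a'\<in>UNIV. \<Sum>b'\<in>UNIV. \<Sum>c'\<in>UNIV. \<Sum>a\<in>UNIV. \<Sum>b\<in>UNIV. \<Sum>c\<in>UNIV.
        L1 i a * L2 j b * L3 k c * (M1 a a' * M2 b b' * M3 c c' * phi a' b' c'))"
    by (rule sum_swap_triple)
  also have "\<dots> = loc_apply (mat_mul L1 M1) (mat_mul L2 M2) (mat_mul L3 M3) phi i j k"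
    unfolding loc_apply_def mat_mul_def
    by (simp add: sum_distrib_left sum_distrib_right mult_ac)
  finally show "loc_apply L1 L2 L3 (loc_apply M1 M2 M3 phi) i j k =
      loc_apply (mat_mul L1 M1) (mat_mul L2 M2) (mat_mul L3 M3) phi i j k" .
qed

lemma loc_apply_scalar_ops:
  "loc_apply L1 (\<lambda>j b. s * id_mat j b) (\<lambda>k c. t * id_mat k c) phi i j k =
   s * t * (\<Sum>a\<in>UNIV. L1 i a * phi a j k)"
  using exhaust_2_zero[of j] exhaust_2_zero[of k]
  by (auto simp: loc_apply_def sum_UNIV_2 id_mat_def sum_distrib_left algebra_simps)

lemma loc_apply_id: "loc_apply id_mat id_mat id_mat phi = phi"
proof (intro ext)
  fix i j k
  show "loc_apply id_mat id_mat id_mat phi i j k = phi i j k"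
    using loc_apply_scalar_ops[of id_mat 1 1 phi i j k]
    by (simp only: mult_1_left) (simp add: id_mat_mult)
qed

lemma slocc_le_trans:
  assumes "slocc_le psi phi" and "slocc_le phi chi"
  shows "slocc_le psi chi"
proof -
  obtain L1 L2 L3 where "psi = loc_apply L1 L2 L3 phi"
    using assms(1) unfolding slocc_le_def by metis
  moreover obtain M1 M2 M3 where "phi = loc_apply M1 M2 M3 chi"
    using assms(2) unfolding slocc_le_def by metis
  ultimately show ?thesis
    unfolding slocc_le_def by (metis loc_apply_compose)
qed

lemma slocc_le_invertible_change:
  assumes "det2 A \<noteq> 0" and "det2 C \<noteq> 0"
  shows "slocc_le phi (loc_apply id_mat A C phi)"
proof -
  have "loc_apply id_mat (inv2 A) (inv2 C) (loc_apply id_mat A C phi) = phi"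
    by (simp add: loc_apply_compose inv2_mult assms mat_mul_id_left loc_apply_id)
  then show ?thesis
    unfolding slocc_le_def by blast
qed

lemma loc_apply_id_first:
  "loc_apply id_mat A C phi i j k = (\<Sum>b\<in>UNIV. \<Sum>c\<in>UNIV. A j b * C k c * phi i b c)"
  using exhaust_3_zero[of i]
  by (auto simp: loc_apply_def sum_UNIV_3 id_mat_def)

section \<open>The two normal forms\<close>

lemma loc_apply_Phi1:
  "loc_apply L1 L2 L3 Phi1 i j k =
     L1 i 0 * L2 j 0 * L3 k 0 + L1 i 1 * L2 j 0 * L3 k 1 + L1 i 2 * L2 j 1 * L3 k 1"
  by (simp add: loc_apply_def sum_UNIV_2 sum_UNIV_3 Phi1_def)

lemma loc_apply_Phi2:
  "loc_apply L1 L2 L3 Phi2 i j k =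
     L1 i 0 * L2 j 0 * L3 k 0 + L1 i 1 * (L2 j 0 * L3 k 1 + L2 j 1 * L3 k 0) + L1 i 2 * L2 j 1 * L3 k 1"
  by (simp add: loc_apply_def sum_UNIV_2 sum_UNIV_3 Phi2_def algebra_simps)

lemma upper_triangular_le_Phi1:
  assumes "\<And>i. psi i 1 0 = 0"
  shows "slocc_le psi Phi1"
proof -
  define L1 where "L1 i a = (if a = 0 then psi i 0 0 else if a = 1 then psi i 0 1 else psi i 1 1)"
    for i a :: 3
  have "loc_apply L1 id_mat id_mat Phi1 i j k = psi i j k" for i j k
    using exhaust_2_zero[of j] exhaust_2_zero[of k] assms[of i]
    by (auto simp: loc_apply_Phi1 L1_def id_mat_def)
  then show ?thesis
    unfolding slocc_le_def by blast
qed

lemma symmetric_le_Phi2: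
  assumes "\<And>i. psi i 0 1 = psi i 1 0"
  shows "slocc_le psi Phi2"
proof -
  define L1 where "L1 i a = (if a = 0 then psi i 0 0 else if a = 1 then psi i 0 1 else psi i 1 1)"
    for i a :: 3
  have "loc_apply L1 id_mat id_mat Phi2 i j k = psi i j k" for i j k
    using exhaust_2_zero[of j] exhaust_2_zero[of k] assms[of i]
    by (auto simp: loc_apply_Phi2 L1_def id_mat_def)
  then show ?thesis
    unfolding slocc_le_def by blast
qed

section \<open>Every state lies below Phi1 or Phi2\<close>

lemma zero_row_kernel:
  fixes M :: "'a::field^'n^'n"
  assumes "row r M = 0"
  shows "\<exists>x. x \<noteq> 0 \<and> M *v x = 0"
proof -
  have "det M = 0"
    using assms by (rule det_zero_row(2))
  then have "\<not> invertible M"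
    using invertible_det_nz by blast
  then show ?thesis
    using invertible_left_inverse matrix_left_invertible_ker by metis
qed

text \<open>The three slices of a state span at most three dimensions of the four-dimensional space
  of 2x2 matrices, so some nonzero linear form Q vanishes on all of them.\<close>

lemma slice_annihilator:
  fixes phi :: state
  shows "\<exists>Q. Q \<noteq> 0 \<and> (\<forall>i. (\<Sum>b\<in>UNIV. \<Sum>c\<in>UNIV. Q b c * phi i b c) = 0)"
proof -
  define slice :: "4 \<Rightarrow> 2 \<Rightarrow> 2 \<Rightarrow> complex"
    where "slice r = (if r = 1 then phi 0 else if r = 2 then phi 1 else if r = 3 then phi 2 else 0)"
    for r
  define M :: "complex^4^4"
    where "M = (\<chi> r k. if k = 1 then slice r 0 0 else if k = 2 then slice r 0 1
                       else if k = 3 then slice r 1 0 else slice r 1 1)"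
  have "row 4 M = 0"
    by (simp add: M_def slice_def row_def vec_eq_iff)
  then obtain x where x: "x \<noteq> 0" "M *v x = 0"
    using zero_row_kernel by blast
  define Q :: "2 \<Rightarrow> 2 \<Rightarrow> complex"
    where "Q b c = x $ (if b = 0 then (if c = 0 then 1 else 2) else (if c = 0 then 3 else 4))" for b c
  have kernel_row: "(\<Sum>b\<in>UNIV. \<Sum>c\<in>UNIV. Q b c * slice r b c) = 0" for r
  proof -
    have "(\<Sum>b\<in>UNIV. \<Sum>c\<in>UNIV. Q b c * slice r b c) = (M *v x) $ r"
      by (simp add: matrix_vector_mult_def sum_4 sum_UNIV_2 M_def Q_def algebra_simps)
    then show ?thesis
      using x(2) by simp
  qed
  have "(\<Sum>b\<in>UNIV. \<Sum>c\<in>UNIV. Q b c * phi i b c) = 0" for i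
    using exhaust_3_zero[of i] kernel_row[of 1] kernel_row[of 2] kernel_row[of 3]
    by (auto simp: slice_def)
  moreover have "Q \<noteq> 0"
  proof
    assume "Q = 0"
    then have "x $ k = 0" for k
      using exhaust_4[of k] by (auto simp: Q_def fun_eq_iff forall_UNIV_2 dest: spec[of _ 0] spec[of _ 1])
    then show False
      using x(1) by (simp add: vec_eq_iff)
  qed
  ultimately show ?thesis
    by blast
qed

lemma rank_one_2x2:
  assumes "Q \<noteq> 0" and "det2 Q = 0"
  shows "\<exists>y w. y \<noteq> 0 \<and> w \<noteq> 0 \<and> (\<forall>b c. Q b c = y b * w c)"
proof (cases "Q 0 = 0")
  case True
  then have "Q 1 \<noteq> 0"
    using assms(1) by (auto simp: fun_eq_iff forall_UNIV_2)
  moreover have "Q b c = (if b = 0 then 0 else 1) * Q 1 c" for b c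
    using True exhaust_2_zero[of b] by auto
  moreover have "(\<lambda>b::2. if b = 0 then 0 else 1 :: complex) \<noteq> 0"
    by (auto simp: fun_eq_iff intro: exI[of _ "1::2"])
  ultimately show ?thesis
    by blast
next
  case False
  define lam where "lam = (if Q 0 0 \<noteq> 0 then Q 1 0 / Q 0 0 else Q 1 1 / Q 0 1)"
  have row1: "Q 1 c = lam * Q 0 c" for c
    using False assms(2) exhaust_2_zero[of c]
    by (auto simp: lam_def det2_def fun_eq_iff forall_UNIV_2 field_simps)
  have "Q b c = (if b = 0 then 1 else lam) * Q 0 c" for b c
    using row1 exhaust_2_zero[of b] by auto
  moreover have "(\<lambda>b::2. if b = 0 then 1 else lam) \<noteq> 0"
    by (auto simp: fun_eq_iff dest: spec[of _ 0])
  ultimately show ?thesis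
    using False by blast
qed

lemma invertible_completion:
  fixes v :: "2 \<Rightarrow> complex"
  assumes "v \<noteq> 0"
  shows "\<exists>A. det2 A \<noteq> 0 \<and> A r = v"
proof -
  define u :: "2 \<Rightarrow> complex" where "u c = (if (c = 0) = (v 0 = 0) then 1 else 0)" for c
  define A where "A i = (if i = r then v else u)" for i
  have "v 0 \<noteq> 0 \<or> v 1 \<noteq> 0"
    using assms by (auto simp: fun_eq_iff forall_UNIV_2)
  then have "det2 A \<noteq> 0"
    using exhaust_2_zero[of r] by (auto simp: det2_def A_def u_def)
  moreover have "A r = v"
    by (simp add: A_def)
  ultimately show ?thesis
    by blast
qed

text \<open>A rank-one annihilator y w^T: choosing bases with y as second row on the second qubit
  and w as first row on the third makes all slices upper triangular.\<close>

lemma le_Phi1_if_rank_one_annihilator: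
  assumes "y \<noteq> 0" and "w \<noteq> 0"
    and annihilates: "\<And>i. (\<Sum>b\<in>UNIV. \<Sum>c\<in>UNIV. y b * w c * phi i b c) = 0"
  shows "slocc_le phi Phi1"
proof -
  obtain A where A: "det2 A \<noteq> 0" "A 1 = y"
    using invertible_completion[OF assms(1)] by blast
  obtain C where C: "det2 C \<noteq> 0" "C 0 = w"
    using invertible_completion[OF assms(2)] by blast
  have "loc_apply id_mat A C phi i 1 0 = 0" for i
    using annihilates[of i] by (simp add: loc_apply_id_first A(2) C(2))
  then have "slocc_le (loc_apply id_mat A C phi) Phi1"
    by (rule upper_triangular_le_Phi1)
  with slocc_le_invertible_change[OF A(1) C(1)] show ?thesis
    by (rule slocc_le_trans)
qed

text \<open>An invertible annihilator Q: the operator with rows Q(-,1) and -Q(-,0) on the second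
  qubit is invertible and makes all slices symmetric.\<close>

lemma le_Phi2_if_invertible_annihilator:
  assumes "det2 Q \<noteq> 0"
    and annihilates: "\<And>i. (\<Sum>b\<in>UNIV. \<Sum>c\<in>UNIV. Q b c * phi i b c) = 0"
  shows "slocc_le phi Phi2"
proof -
  define A where "A j b = (if j = 0 then Q b 1 else - Q b 0)" for j b :: 2
  have det_A: "det2 A \<noteq> 0"
    using assms(1) by (simp add: A_def det2_def algebra_simps)
  have det_id: "det2 id_mat \<noteq> 0"
    by (simp add: det2_def id_mat_def)
  have "loc_apply id_mat A id_mat phi i 0 1 = loc_apply id_mat A id_mat phi i 1 0" for i
  proof -
    have "loc_apply id_mat A id_mat phi i 0 1 - loc_apply id_mat A id_mat phi i 1 0 =
          (\<Sum>b\<in>UNIV. \<Sum>c\<in>UNIV. Q b c * phi i b c)"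
      by (simp add: loc_apply_id_first A_def id_mat_def sum_UNIV_2 algebra_simps)
    then show ?thesis
      using annihilates[of i] by simp
  qed
  then have "slocc_le (loc_apply id_mat A id_mat phi) Phi2"
    by (rule symmetric_le_Phi2)
  with slocc_le_invertible_change[OF det_A det_id] show ?thesis
    by (rule slocc_le_trans)
qed

lemma le_Phi1_or_le_Phi2: "slocc_le phi Phi1 \<or> slocc_le phi Phi2"
proof -
  obtain Q where "Q \<noteq> 0" and annihilates: "\<And>i. (\<Sum>b\<in>UNIV. \<Sum>c\<in>UNIV. Q b c * phi i b c) = 0"
    using slice_annihilator[of phi] by blast
  show ?thesis
  proof (cases "det2 Q = 0")
    case True
    then obtain y w where "y \<noteq> 0" "w \<noteq> 0" "\<And>b c. Q b c = y b * w c"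
      using rank_one_2x2[OF \<open>Q \<noteq> 0\<close>] by blast
    then have "slocc_le phi Phi1"
      using annihilates by (intro le_Phi1_if_rank_one_annihilator[of y w]) simp_all
    then show ?thesis ..
  next
    case False
    then show ?thesis
      using le_Phi2_if_invertible_annihilator annihilates by blast
  qed
qed

section \<open>Phi1 and Phi2 are incomparable\<close>

text \<open>A state has full local rank on the second (third) factor if no nonzero operator on that
  factor annihilates it, i.e. its reduced state there is of rank 2.\<close>

definition full_local_rank2 :: "state \<Rightarrow> bool"
  where "full_local_rank2 psi \<longleftrightarrow> (\<forall>A. loc_apply id_mat A id_mat psi = 0 \<longrightarrow> A = 0)"

definition full_local_rank3 :: "state \<Rightarrow> bool"
  where "full_local_rank3 psi \<longleftrightarrow> (\<forall>C. loc_apply id_mat id_mat C psi = 0 \<longrightarrow> C = 0)"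

lemma loc_apply_zero:
  "loc_apply L1 0 L3 phi = 0" "loc_apply L1 L2 0 phi = 0" "loc_apply L1 L2 L3 0 = 0"
  by (simp_all add: loc_apply_def fun_eq_iff)

lemma adjugate_transform:
  "loc_apply id_mat (adj2 L2) (adj2 L3) (loc_apply L1 L2 L3 phi) i j k =
     det2 L2 * det2 L3 * (\<Sum>a\<in>UNIV. L1 i a * phi a j k)"
  by (simp add: loc_apply_compose adj2_mult mat_mul_id_left loc_apply_scalar_ops)

text \<open>Operators reaching a state of full local rank must be invertible on both qubits: a
  singular L2 is killed by its adjugate, which is then forced to vanish.\<close>

lemma local_operators_invertible:
  assumes psi: "loc_apply L1 L2 L3 phi = psi"
    and rank2: "full_local_rank2 psi" and rank3: "full_local_rank3 psi"
  shows "det2 L2 \<noteq> 0 \<and> det2 L3 \<noteq> 0"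
proof -
  have "psi \<noteq> 0"
  proof
    assume "psi = 0"
    then have "id_mat = (0 :: 2 \<Rightarrow> 2 \<Rightarrow> complex)"
      using rank2 by (simp add: full_local_rank2_def loc_apply_zero)
    then show False
      by (metis id_mat_def zero_fun_def zero_neq_one)
  qed
  have "det2 L2 \<noteq> 0"
  proof
    assume "det2 L2 = 0"
    then have "loc_apply id_mat (adj2 L2) id_mat psi = 0"
      unfolding psi[symmetric]
      by (simp add: loc_apply_compose adj2_mult mat_mul_id_left zero_fun_def[symmetric] loc_apply_zero)
    then have "L2 = 0"
      using rank2 adj2_eq_0 by (simp add: full_local_rank2_def)
    then show False
      using psi \<open>psi \<noteq> 0\<close> by (simp add: loc_apply_zero)
  qed
  moreover have "det2 L3 \<noteq> 0"
  proof
    assume "det2 L3 = 0"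
    then have "loc_apply id_mat id_mat (adj2 L3) psi = 0"
      unfolding psi[symmetric]
      by (simp add: loc_apply_compose adj2_mult mat_mul_id_left zero_fun_def[symmetric] loc_apply_zero)
    then have "L3 = 0"
      using rank3 adj2_eq_0 by (simp add: full_local_rank3_def)
    then show False
      using psi \<open>psi \<noteq> 0\<close> by (simp add: loc_apply_zero)
  qed
  ultimately show ?thesis ..
qed

text \<open>Phi1 and Phi2 have full local rank on both qubits, since their slices 0 and 2 are
  e0 e0^T and e1 e1^T.\<close>

lemma Phi1_full_local_rank: "full_local_rank2 Phi1" "full_local_rank3 Phi1"
proof -
  show "full_local_rank2 Phi1"
    unfolding full_local_rank2_def
  proof (intro allI impI)
    fix A :: "2 \<Rightarrow> 2 \<Rightarrow> complex"
    assume "loc_apply id_mat A id_mat Phi1 = 0"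
    then have "loc_apply id_mat A id_mat Phi1 i j k = 0" for i j k
      by simp
    from this[of 0 _ 0] this[of 2 _ 1] show "A = 0"
      by (simp add: loc_apply_Phi1 id_mat_def fun_eq_iff forall_UNIV_2)
  qed
  show "full_local_rank3 Phi1"
    unfolding full_local_rank3_def
  proof (intro allI impI)
    fix C :: "2 \<Rightarrow> 2 \<Rightarrow> complex"
    assume "loc_apply id_mat id_mat C Phi1 = 0"
    then have "loc_apply id_mat id_mat C Phi1 i j k = 0" for i j k
      by simp
    from this[of 0 0] this[of 2 1] show "C = 0"
      by (simp add: loc_apply_Phi1 id_mat_def fun_eq_iff forall_UNIV_2)
  qed
qed

lemma Phi2_full_local_rank: "full_local_rank2 Phi2" "full_local_rank3 Phi2"
proof -
  show "full_local_rank2 Phi2"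
    unfolding full_local_rank2_def
  proof (intro allI impI)
    fix A :: "2 \<Rightarrow> 2 \<Rightarrow> complex"
    assume "loc_apply id_mat A id_mat Phi2 = 0"
    then have "loc_apply id_mat A id_mat Phi2 i j k = 0" for i j k
      by simp
    from this[of 0 _ 0] this[of 2 _ 1] show "A = 0"
      by (simp add: loc_apply_Phi2 id_mat_def fun_eq_iff forall_UNIV_2)
  qed
  show "full_local_rank3 Phi2"
    unfolding full_local_rank3_def
  proof (intro allI impI)
    fix C :: "2 \<Rightarrow> 2 \<Rightarrow> complex"
    assume "loc_apply id_mat id_mat C Phi2 = 0"
    then have "loc_apply id_mat id_mat C Phi2 i j k = 0" for i j k
      by simp
    from this[of 0 0] this[of 2 1] show "C = 0"
      by (simp add: loc_apply_Phi2 id_mat_def fun_eq_iff forall_UNIV_2)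
  qed
qed

text \<open>Invertible operators on the qubits never make all slices of Phi1 symmetric, nor all
  slices of Phi2 upper triangular: the first column of A would be orthogonal to both columns
  of C, resp. the second row of A or first row of C would vanish.\<close>

lemma Phi1_not_symmetrizable:
  assumes "det2 A \<noteq> 0" and "det2 C \<noteq> 0"
  shows "\<exists>i. loc_apply id_mat A C Phi1 i 0 1 \<noteq> loc_apply id_mat A C Phi1 i 1 0"
proof (rule ccontr)
  assume "\<not> ?thesis"
  then have sym: "loc_apply id_mat A C Phi1 i 0 1 = loc_apply id_mat A C Phi1 i 1 0" for i
    by blast
  from sym[of 0] have e0: "A 0 0 * C 1 0 = A 1 0 * C 0 0"
    by (simp add: loc_apply_Phi1 id_mat_def)
  from sym[of 1] have e1: "A 0 0 * C 1 1 = A 1 0 * C 0 1"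
    by (simp add: loc_apply_Phi1 id_mat_def)
  have "det2 C * A 0 0 = C 0 0 * (A 0 0 * C 1 1) - C 0 1 * (A 0 0 * C 1 0)"
    by (simp add: det2_def algebra_simps)
  then have "det2 C * A 0 0 = 0"
    unfolding e0 e1 by (simp add: algebra_simps)
  have "det2 C * A 1 0 = C 1 1 * (A 1 0 * C 0 0) - C 1 0 * (A 1 0 * C 0 1)"
    by (simp add: det2_def algebra_simps)
  then have "det2 C * A 1 0 = 0"
    unfolding e0[symmetric] e1[symmetric] by (simp add: algebra_simps)
  with \<open>det2 C * A 0 0 = 0\<close> have "A 0 0 = 0" "A 1 0 = 0"
    using assms(2) by simp_all
  then show False
    using assms(1) by (simp add: det2_def)
qed

lemma Phi2_not_triangularizable:
  assumes "det2 A \<noteq> 0" and "det2 C \<noteq> 0"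
  shows "\<exists>i. loc_apply id_mat A C Phi2 i 1 0 \<noteq> 0"
proof (rule ccontr)
  assume "\<not> ?thesis"
  then have lower: "loc_apply id_mat A C Phi2 i 1 0 = 0" for i
    by blast
  from lower[of 0] lower[of 1] lower[of 2]
  have l0: "A 1 0 * C 0 0 = 0" and l1: "A 1 0 * C 0 1 + A 1 1 * C 0 0 = 0"
    and l2: "A 1 1 * C 0 1 = 0"
    by (simp_all add: loc_apply_Phi2 id_mat_def)
  have "C 0 0 = 0 \<and> C 0 1 = 0"
  proof (cases "A 1 0 = 0")
    case True
    then have "A 1 1 \<noteq> 0"
      using assms(1) by (simp add: det2_def)
    then show ?thesis
      using True l1 l2 by simp
  next
    case False
    then show ?thesis
      using l0 l1 by simp
  qed
  then show False
    using assms(2) by (simp add: det2_def)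
qed

lemma not_Phi1_le_Phi2: "\<not> slocc_le Phi1 Phi2"
proof
  assume "slocc_le Phi1 Phi2"
  then obtain L1 L2 L3 where L: "loc_apply L1 L2 L3 Phi2 = Phi1"
    unfolding slocc_le_def by blast
  then have "det2 (adj2 L2) \<noteq> 0 \<and> det2 (adj2 L3) \<noteq> 0"
    unfolding det2_adj2 using Phi1_full_local_rank by (rule local_operators_invertible)
  moreover have "loc_apply id_mat (adj2 L2) (adj2 L3) Phi1 i 0 1 =
                 loc_apply id_mat (adj2 L2) (adj2 L3) Phi1 i 1 0" for i
    unfolding L[symmetric] adjugate_transform by (simp add: Phi2_def)
  ultimately show False
    using Phi1_not_symmetrizable by blast
qed

lemma not_Phi2_le_Phi1: "\<not> slocc_le Phi2 Phi1"
proof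
  assume "slocc_le Phi2 Phi1"
  then obtain L1 L2 L3 where L: "loc_apply L1 L2 L3 Phi1 = Phi2"
    unfolding slocc_le_def by blast
  then have "det2 (adj2 L2) \<noteq> 0 \<and> det2 (adj2 L3) \<noteq> 0"
    unfolding det2_adj2 using Phi2_full_local_rank by (rule local_operators_invertible)
  moreover have "loc_apply id_mat (adj2 L2) (adj2 L3) Phi2 i 1 0 = 0" for i
    unfolding L[symmetric] adjugate_transform by (simp add: Phi1_def)
  ultimately show False
    using Phi2_not_triangularizable by blast
qed

theorem mainTheorem7:
  shows "slocc_maximal Phi1 \<and> slocc_maximal Phi2 \<and> \<not> slocc_equiv Phi1 Phi2 \<and>
         (\<forall>phi. slocc_maximal phi \<longrightarrow> slocc_equiv phi Phi1 \<or> slocc_equiv phi Phi2)"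
proof (intro conjI allI impI)
  show "slocc_maximal Phi1"
    unfolding slocc_maximal_def
    using le_Phi1_or_le_Phi2 slocc_le_trans not_Phi1_le_Phi2 by blast
  show "slocc_maximal Phi2"
    unfolding slocc_maximal_def
    using le_Phi1_or_le_Phi2 slocc_le_trans not_Phi2_le_Phi1 by blast
  show "\<not> slocc_equiv Phi1 Phi2"
    unfolding slocc_equiv_def using not_Phi1_le_Phi2 by blast
  show "slocc_equiv phi Phi1 \<or> slocc_equiv phi Phi2" if "slocc_maximal phi" for phi
    using that le_Phi1_or_le_Phi2[of phi] unfolding slocc_maximal_def slocc_equiv_def by blast
qed

end
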